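(* Let $E,r,\sigma>0$, $\gamma=\frac{2r}{\sigma^2}$, and write $f_2^*(\zeta;\gamma)$ for $f_2^*(\zeta)$ to indicate dependence on $\gamma$. Let $\gamma_0=\min\{\gamma>0 : \max_{\zeta>0}f_2^*(\zeta;\gamma)\le\pi\}$ (numerically $\gamma_0\approx0.0167821$). If $\gamma\ge\gamma_0$, then $f_2^*(\zeta;\gamma)\in[0,\pi]$ for every $\zeta>0$, and consequently $\frac{d^2}{d\tau^2}\varrho^{Zhu}(\tau)>0$ for all $\tau>0$; that is, $\tau\mapsto\varrho^{Zhu}(\tau)$ is convex.
   Context: Set $a=\frac{1+\gamma}{2}$, $b=\frac{1-\gamma}{2}$, and for $\zeta>0$ \[ f_1^*(\zeta)=\frac{1}{b^2+\zeta^2}\Big[b\ln\Big(\tfrac{1}{\gamma}\sqrt{a^2+\zeta^2}\Big)+\zeta\arctan(\zeta/a)\Big],\quad f_2^*(\zeta)=\frac{1}{b^2+\zeta^2}\Big[\zeta\ln\Big(\tfrac{1}{\gamma}\sqrt{a^2+\zeta^2}\Big)-b\arctan(\zeta/a)\Big]. \] Zhu's approximation of the early exercise boundary of the American put (as a function of time to maturity $\tau>0$) is \[ \varrho^{Zhu}(\tau)=\frac{\gamma E}{1+\gamma}+\frac{2E}{\pi}\int_0^\infty\frac{\zeta\,e^{-\tau\frac{\sigma^2}{2}(a^2+\zeta^2)}}{a^2+\zeta^2}\,e^{-f_1^*(\zeta)}\sin\big(f_2^*(\zeta)\big)\,d\zeta. \] *)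

theory Defs
  imports "HOL-Analysis.Analysis"
begin

definition zhu_a :: "real \<Rightarrow> real" where "zhu_a \<gamma> = (1 + \<gamma>) / 2"
definition zhu_b :: "real \<Rightarrow> real" where "zhu_b \<gamma> = (1 - \<gamma>) / 2"

definition f1star :: "real \<Rightarrow> real \<Rightarrow> real" where
  "f1star \<zeta> \<gamma> = 1 / ((zhu_b \<gamma>)^2 + \<zeta>^2) *
     (zhu_b \<gamma> * ln ((1 / \<gamma>) * sqrt ((zhu_a \<gamma>)^2 + \<zeta>^2))
      + \<zeta> * arctan (\<zeta> / zhu_a \<gamma>))"

definition f2star :: "real \<Rightarrow> real \<Rightarrow> real" where
  "f2star \<zeta> \<gamma> = 1 / ((zhu_b \<gamma>)^2 + \<zeta>^2) *
     (\<zeta> * ln ((1 / \<gamma>) * sqrt ((zhu_a \<gamma>)^2 + \<zeta>^2))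
      - zhu_b \<gamma> * arctan (\<zeta> / zhu_a \<gamma>))"

text \<open>Zhu's approximation of the early exercise boundary, as a function of tau;
  the integral over (0,infinity) is the (improper) Henstock-Kurzweil integral.\<close>
definition rho_zhu :: "real \<Rightarrow> real \<Rightarrow> real \<Rightarrow> real \<Rightarrow> real" where
  "rho_zhu E \<sigma> \<gamma> \<tau> = \<gamma> * E / (1 + \<gamma>) + 2 * E / pi *
     integral {0<..} (\<lambda>\<zeta>. \<zeta> * exp (- \<tau> * \<sigma>^2 / 2 * ((zhu_a \<gamma>)^2 + \<zeta>^2))
        / ((zhu_a \<gamma>)^2 + \<zeta>^2) * exp (- f1star \<zeta> \<gamma>) * sin (f2star \<zeta> \<gamma>))"

definition gamma0 :: real where
  "gamma0 = Inf {\<gamma>. \<gamma> > 0 \<and> (\<forall>\<zeta>>0. f2star \<zeta> \<gamma> \<le> pi)}"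

end

theory Submission
  imports Defs
begin

text \<open>
  The phase \<open>f2*\<close> and the amplitude \<open>f1*\<close> are integrals over the segment
  \<open>s \<in> [0,1]\<close> of \<open>s\<zeta> / |p(s) + i s\<zeta>|\<^sup>2\<close> and \<open>p(s) / |p(s) + i s\<zeta>|\<^sup>2\<close>, where
  \<open>p(s) = \<gamma> + s b\<close> runs from \<open>\<gamma>\<close> to \<open>a\<close> (the integrands are derivatives of explicit
  log/arctan antiderivatives).  This representation shows at once that \<open>f1* \<ge> 0\<close>,
  \<open>0 < f2*(\<zeta>) \<le> \<zeta> / min(\<gamma>,a)\<^sup>2\<close>, and that \<open>f2*\<close> decreases in \<open>\<gamma>\<close>; together with
  continuity in \<open>\<gamma>\<close> this gives \<open>f2* \<le> \<pi>\<close> for every \<open>\<gamma> \<ge> \<gamma>\<^sub>0\<close>.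

  Writing \<open>\<rho>(\<tau>)\<close> as a Gaussian Laplace transform
  \<open>\<integral>\<^sub>0\<^sup>\<infinity> k(\<zeta>) exp(-t(a\<^sup>2+\<zeta>\<^sup>2)) d\<zeta>\<close> with \<open>t = \<sigma>\<^sup>2\<tau>/2\<close>, we differentiate twice under the
  integral sign.  This is justified for any continuous kernel growing slower than every
  Gaussian, via a second-order Taylor bound for \<open>exp\<close>.  The second derivative is the
  transform of \<open>(a\<^sup>2+\<zeta>\<^sup>2)\<^sup>2 k(\<zeta>)\<close>, which is nonnegative because \<open>sin f2* \<ge> 0\<close> and strictly
  positive near \<open>\<zeta> = 0\<close>; convexity follows.
\<close>

lemma exp_second_order_bound:
  fixes x y :: real
  shows "\<bar>exp (-y) - exp (-x) + (y - x) * exp (-x)\<bar> \<le> (y - x)^2 / 2 * exp (-x + \<bar>y - x\<bar>)"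
proof -
  obtain t where t: "\<bar>t\<bar> \<le> \<bar>x - y\<bar>"
    and taylor: "exp (x - y) = (\<Sum>m<2. (x - y)^m / fact m) + exp t / fact 2 * (x - y)^2"
    using Maclaurin_exp_le[of "x - y" 2] by blast
  have taylor2: "exp (x - y) = 1 + (x - y) + exp t / 2 * (y - x)^2"
    using taylor by (simp add: numeral_2_eq_2 power2_eq_square algebra_simps)
  have "exp (-y) = exp (-x) * exp (x - y)" by (simp add: exp_add[symmetric])
  also have "\<dots> = exp (-x) * (1 + (x - y)) + exp (-x) * exp t / 2 * (y - x)^2"
    unfolding taylor2 by (simp add: algebra_simps)
  also have "exp (-x) * exp t = exp (-x + t)" by (rule exp_add[symmetric])
  finally have remainder: "exp (-y) - exp (-x) + (y - x) * exp (-x) = exp (-x + t) / 2 * (y - x)^2"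
    by (simp add: algebra_simps)
  have "exp (-x + t) \<le> exp (-x + \<bar>y - x\<bar>)"
    using t by (simp add: abs_minus_commute)
  then have "exp (-x + t) / 2 * (y - x)^2 \<le> exp (-x + \<bar>y - x\<bar>) / 2 * (y - x)^2"
    by (intro mult_right_mono divide_right_mono) auto
  then show ?thesis
    unfolding remainder by (simp add: mult.commute)
qed

lemma gaussian_factor_remainder:
  fixes t \<tau> u :: real
  assumes u: "u \<ge> 0" and t: "\<bar>t - \<tau>\<bar> \<le> \<tau> / 2"
  shows "\<bar>exp (- (t * u)) - exp (- (\<tau> * u)) + (t * u - \<tau> * u) * exp (- (\<tau> * u))\<bar>
    \<le> (t - \<tau>)^2 * (u^2 / 2 * exp (- (\<tau> / 2) * u))"
proof -
  have diff: "t * u - \<tau> * u = (t - \<tau>) * u"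
    by (simp add: algebra_simps)
  have "\<bar>t * u - \<tau> * u\<bar> = \<bar>t - \<tau>\<bar> * u"
    unfolding diff abs_mult using u by simp
  also have "\<dots> \<le> \<tau> * u / 2"
    using t u mult_right_mono[of "\<bar>t - \<tau>\<bar>" "\<tau> / 2" u] by simp
  finally have "exp (- (\<tau> * u) + \<bar>t * u - \<tau> * u\<bar>) \<le> exp (- (\<tau> / 2) * u)"
    by simp
  then have "\<bar>exp (- (t * u)) - exp (- (\<tau> * u)) + (t * u - \<tau> * u) * exp (- (\<tau> * u))\<bar>
      \<le> (t * u - \<tau> * u)^2 / 2 * exp (- (\<tau> / 2) * u)"
    by (rule order_trans[OF exp_second_order_bound mult_left_mono]) simp_all
  also have "\<dots> = (t - \<tau>)^2 * (u^2 / 2 * exp (- (\<tau> / 2) * u))"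
    unfolding diff by (simp add: power_mult_distrib)
  finally show ?thesis .
qed

text \<open>A kernel \<open>h\<close> has slow growth if it is dominated by \<open>exp(\<eta>(A+z\<^sup>2))\<close> for every
  \<open>\<eta> > 0\<close>; such kernels stay integrable against every Gaussian factor.\<close>
definition slow_growth :: "(real \<Rightarrow> real) \<Rightarrow> real \<Rightarrow> bool" where
  "slow_growth h A \<longleftrightarrow> (\<forall>\<eta>>0. \<exists>B. \<forall>z>0. \<bar>h z\<bar> \<le> B * exp (\<eta> * (A + z^2)))"

text \<open>Gaussians are integrable on the half line (dominated by a multiple of \<open>exp(-z)\<close>).\<close>
lemma gaussian_absolutely_integrable:
  fixes e A :: real
  assumes "e > 0"
  shows "(\<lambda>z. exp (- e * (A + z^2))) absolutely_integrable_on {0<..}"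
proof (rule measurable_bounded_by_integrable_imp_absolutely_integrable)
  show "(\<lambda>z. exp (- e * (A + z^2))) \<in> borel_measurable (lebesgue_on {0<..})"
    by (intro continuous_imp_measurable_on_sets_lebesgue continuous_intros) auto
  have "(\<lambda>x::real. exp (-1 * x)) integrable_on {0..}"
    using integrable_on_exp_minus_to_infinity[of 1 0] by simp
  then have "(\<lambda>x::real. exp (- x)) absolutely_integrable_on {0..}"
    by (intro nonnegative_absolutely_integrable_1) auto
  then have "(\<lambda>x::real. exp (- x)) absolutely_integrable_on {0<..}"
    by (rule set_integrable_subset) auto
  then have "(\<lambda>x::real. exp (- x)) integrable_on {0<..}"
    using set_lebesgue_integral_eq_integral(1) by blast
  from integrable_on_cmult_left[OF this, of "exp (- e * A + 1 / (4 * e))"]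
  show "(\<lambda>z. exp (- e * A + 1 / (4 * e)) * exp (- z)) integrable_on {0<..}"
    by simp
  fix z :: real
  have "0 \<le> (2 * e * z - 1)^2 / (4 * e)" using assms by simp
  also have "\<dots> = e * z^2 - z + 1 / (4 * e)"
    using assms by (simp add: field_simps power2_eq_square)
  finally have "- e * (A + z^2) \<le> - e * A + 1 / (4 * e) + - z"
    by (simp add: algebra_simps)
  then show "norm (exp (- e * (A + z^2))) \<le> exp (- e * A + 1 / (4 * e)) * exp (- z)"
    by (simp add: exp_add[symmetric])
qed auto

lemma slow_growth_integrable:
  assumes cont: "continuous_on {0<..} h" and slow: "slow_growth h A" and e: "e > 0"
  shows "(\<lambda>z. h z * exp (- e * (A + z^2))) integrable_on {0<..}"
proof -
  obtain B where B: "\<And>z. z > 0 \<Longrightarrow> \<bar>h z\<bar> \<le> B * exp (e / 2 * (A + z^2))"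
    using slow e unfolding slow_growth_def by (meson half_gt_zero)
  have "(\<lambda>z. h z * exp (- e * (A + z^2))) absolutely_integrable_on {0<..}"
  proof (rule measurable_bounded_by_integrable_imp_absolutely_integrable)
    show "(\<lambda>z. h z * exp (- e * (A + z^2))) \<in> borel_measurable (lebesgue_on {0<..})"
      by (intro continuous_imp_measurable_on_sets_lebesgue continuous_intros cont) auto
    have "(\<lambda>z. exp (- (e / 2) * (A + z^2))) integrable_on {0<..}"
      using gaussian_absolutely_integrable[of "e / 2" A] e set_lebesgue_integral_eq_integral(1)
      by auto
    from integrable_on_cmult_left[OF this, of B]
    show "(\<lambda>z. B * exp (- (e / 2) * (A + z^2))) integrable_on {0<..}"
      by simp
    fix z :: real assume z: "z \<in> {0<..}"
    have "norm (h z * exp (- e * (A + z^2))) = \<bar>h z\<bar> * exp (- e * (A + z^2))"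
      by (simp add: abs_mult)
    also have "\<dots> \<le> B * exp (e / 2 * (A + z^2)) * exp (- e * (A + z^2))"
      using B[of z] z by (intro mult_right_mono) auto
    also have "\<dots> = B * exp (- (e / 2) * (A + z^2))"
      by (simp add: mult.assoc exp_add[symmetric] algebra_simps)
    finally show "norm (h z * exp (- e * (A + z^2))) \<le> B * exp (- (e / 2) * (A + z^2))" .
  qed auto
  then show ?thesis using set_lebesgue_integral_eq_integral(1) by blast
qed

lemma slow_growth_cmult: "slow_growth h A \<Longrightarrow> slow_growth (\<lambda>z. k * h z) A"
  unfolding slow_growth_def
proof (intro allI impI)
  fix \<eta> :: real assume "\<forall>\<eta>>0. \<exists>B. \<forall>z>0. \<bar>h z\<bar> \<le> B * exp (\<eta> * (A + z^2))" "\<eta> > 0"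
  then obtain B where B: "\<forall>z>0. \<bar>h z\<bar> \<le> B * exp (\<eta> * (A + z^2))" by blast
  show "\<exists>B. \<forall>z>0. \<bar>k * h z\<bar> \<le> B * exp (\<eta> * (A + z^2))"
    by (rule exI[of _ "\<bar>k\<bar> * B"])
      (auto simp: abs_mult mult.assoc intro: mult_left_mono B[rule_format])
qed

lemma slow_growth_weight:
  assumes A: "A \<ge> 0" and slow: "slow_growth h A"
  shows "slow_growth (\<lambda>z. (A + z^2) * h z) A"
  unfolding slow_growth_def
proof (intro allI impI)
  fix \<eta> :: real assume \<eta>: "\<eta> > 0"
  obtain B where B: "\<forall>z>0. \<bar>h z\<bar> \<le> B * exp (\<eta> / 2 * (A + z^2))"
    using slow \<eta> unfolding slow_growth_def by (meson half_gt_zero)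
  show "\<exists>B. \<forall>z>0. \<bar>(A + z^2) * h z\<bar> \<le> B * exp (\<eta> * (A + z^2))"
  proof (rule exI[of _ "2 / \<eta> * max B 0"], intro allI impI)
    fix z :: real assume z: "z > 0"
    let ?u = "A + z^2" and ?E = "exp (\<eta> / 2 * (A + z^2))"
    have "?u \<le> 2 / \<eta> * ?E"
      using exp_ge_add_one_self[of "\<eta> / 2 * ?u"] \<eta> by (simp add: field_simps)
    moreover have "\<bar>h z\<bar> \<le> max B 0 * ?E"
      using B z by (smt (verit) exp_gt_zero mult_right_mono)
    ultimately have "\<bar>?u * h z\<bar> \<le> (2 / \<eta> * ?E) * (max B 0 * ?E)"
      unfolding abs_mult using A \<eta> by (intro mult_mono) auto
    also have "\<dots> = 2 / \<eta> * max B 0 * exp (\<eta> * ?u)"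
      by (simp add: mult_ac exp_add[symmetric])
    finally show "\<bar>?u * h z\<bar> \<le> 2 / \<eta> * max B 0 * exp (\<eta> * ?u)" .
  qed
qed

definition gauss_laplace :: "(real \<Rightarrow> real) \<Rightarrow> real \<Rightarrow> real \<Rightarrow> real" where
  "gauss_laplace h A t = integral {0<..} (\<lambda>z. h z * exp (- t * (A + z^2)))"

lemma has_real_derivative_quadratic_remainder:
  fixes f :: "real \<Rightarrow> real"
  assumes d: "d > 0"
    and remainder: "\<And>t. \<bar>t - x\<bar> < d \<Longrightarrow> \<bar>f t - f x - (t - x) * D\<bar> \<le> C * (t - x)^2"
  shows "(f has_real_derivative D) (at x)"
proof -
  have "((\<lambda>t. (f t - f x) / (t - x) - D) \<longlongrightarrow> 0) (at x)"
  proof (rule Lim_null_comparison)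
    have "((\<lambda>t. C * \<bar>t - x\<bar>) \<longlongrightarrow> C * \<bar>x - x\<bar>) (at x)"
      by (intro tendsto_intros)
    then show "((\<lambda>t. C * \<bar>t - x\<bar>) \<longlongrightarrow> 0) (at x)" by simp
    have "eventually (\<lambda>t. t \<noteq> x \<and> \<bar>t - x\<bar> < d) (at x)"
      unfolding eventually_at using d by (intro exI[of _ d]) (auto simp: dist_real_def)
    then show "eventually (\<lambda>t. norm ((f t - f x) / (t - x) - D) \<le> C * \<bar>t - x\<bar>) (at x)"
    proof eventually_elim
      case (elim t)
      then have "(f t - f x) / (t - x) - D = (f t - f x - (t - x) * D) / (t - x)"
        by (simp add: diff_divide_distrib)
      then have "norm ((f t - f x) / (t - x) - D) = \<bar>f t - f x - (t - x) * D\<bar> / \<bar>t - x\<bar>"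
        by simp
      also have "\<dots> \<le> C * (t - x)^2 / \<bar>t - x\<bar>"
        using remainder elim by (intro divide_right_mono) auto
      also have "\<dots> = C * \<bar>t - x\<bar>"
        using elim by (cases "t < x") (simp_all add: power2_eq_square field_simps)
      finally show ?case .
    qed
  qed
  from tendsto_add[OF this tendsto_const[of D]]
  have "((\<lambda>t. (f t - f x) / (t - x)) \<longlongrightarrow> D) (at x)"
    by simp
  then show ?thesis
    unfolding has_field_derivative_iff .
qed

text \<open>The remainder estimate for the Gaussian Laplace transform: on \<open>|t - \<tau>| < \<tau>/2\<close>
  the Taylor bound is dominated by the integrable majorant
  \<open>(A+z\<^sup>2)\<^sup>2 |h z| exp(-\<tau>(A+z\<^sup>2)/2) / 2\<close>.\<close>
lemma gauss_laplace_quadratic_remainder: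
  assumes A: "A \<ge> 0" and \<tau>: "\<tau> > 0"
    and cont: "continuous_on {0<..} h" and slow: "slow_growth h A"
  shows "\<exists>C. \<forall>t. \<bar>t - \<tau>\<bar> < \<tau> / 2 \<longrightarrow>
    \<bar>gauss_laplace h A t - gauss_laplace h A \<tau> - (t - \<tau>) * gauss_laplace (\<lambda>z. - ((A + z^2) * h z)) A \<tau>\<bar>
      \<le> C * (t - \<tau>)^2"
proof -
  define h' where "h' z = - ((A + z^2) * h z)" for z
  define W where "W z = 1 / 2 * ((A + z^2) * ((A + z^2) * \<bar>h z\<bar>)) * exp (- (\<tau> / 2) * (A + z^2))" for z
  have cont': "continuous_on {0<..} h'"
    unfolding h'_def by (intro continuous_intros cont)
  have slow': "slow_growth h' A"
    unfolding h'_def using slow_growth_cmult[OF slow_growth_weight[OF A slow], of "-1"] by simp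
  have "continuous_on {0<..} (\<lambda>z. 1 / 2 * ((A + z^2) * ((A + z^2) * \<bar>h z\<bar>)))"
    by (intro continuous_intros cont)
  moreover have "slow_growth (\<lambda>z. 1 / 2 * ((A + z^2) * ((A + z^2) * \<bar>h z\<bar>))) A"
    using slow by (intro slow_growth_cmult slow_growth_weight A) (simp add: slow_growth_def)
  ultimately have int_W: "W integrable_on {0<..}"
    unfolding W_def by (rule slow_growth_integrable) (use \<tau> in simp)
  have "\<bar>gauss_laplace h A t - gauss_laplace h A \<tau> - (t - \<tau>) * gauss_laplace h' A \<tau>\<bar>
          \<le> integral {0<..} W * (t - \<tau>)^2" if t: "\<bar>t - \<tau>\<bar> < \<tau> / 2" for t
  proof -
    define R where "R z = h z * (exp (- (t * (A + z^2))) - exp (- (\<tau> * (A + z^2)))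
      + (t * (A + z^2) - \<tau> * (A + z^2)) * exp (- (\<tau> * (A + z^2))))" for z
    have t_pos: "t > 0" using t by linarith
    note int_t = slow_growth_integrable[OF cont slow t_pos]
      and int_\<tau> = slow_growth_integrable[OF cont slow \<tau>]
      and int_\<tau>' = integrable_on_mult_right[OF slow_growth_integrable[OF cont' slow' \<tau>], of "t - \<tau>"]
    have "gauss_laplace h A t - gauss_laplace h A \<tau> - (t - \<tau>) * gauss_laplace h' A \<tau>
        = integral {0<..} (\<lambda>z. h z * exp (- t * (A + z^2)) - h z * exp (- \<tau> * (A + z^2))
            - (t - \<tau>) * (h' z * exp (- \<tau> * (A + z^2))))"
      unfolding gauss_laplace_def
      by (subst integral_diff[OF integrable_diff[OF int_t int_\<tau>] int_\<tau>'],
          subst integral_diff[OF int_t int_\<tau>], simp)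
    also have "\<dots> = integral {0<..} R"
      by (rule integral_cong) (simp add: R_def h'_def algebra_simps)
    finally have eq: "gauss_laplace h A t - gauss_laplace h A \<tau> - (t - \<tau>) * gauss_laplace h' A \<tau>
      = integral {0<..} R" .
    have int_R: "R integrable_on {0<..}"
    proof -
      have "(\<lambda>z. h z * exp (- t * (A + z^2)) - h z * exp (- \<tau> * (A + z^2))
            - (t - \<tau>) * (h' z * exp (- \<tau> * (A + z^2)))) integrable_on {0<..}"
        by (intro integrable_diff int_t int_\<tau> int_\<tau>')
      then show ?thesis
        by (rule integrable_eq) (simp add: R_def h'_def algebra_simps)
    qed
    have bound: "norm (R z) \<le> (t - \<tau>)^2 * W z" for z
    proof -
      have "norm (R z) \<le> \<bar>h z\<bar> * ((t - \<tau>)^2 * ((A + z^2)^2 / 2 * exp (- (\<tau> / 2) * (A + z^2))))"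
        unfolding R_def real_norm_def abs_mult
        using A t by (intro mult_left_mono gaussian_factor_remainder) auto
      also have "\<dots> = (t - \<tau>)^2 * W z"
        unfolding W_def by (simp add: power2_eq_square mult_ac)
      finally show ?thesis .
    qed
    have "(\<lambda>z. (t - \<tau>)^2 * W z) integrable_on {0<..}"
      using integrable_on_cmult_left[OF int_W, of "(t - \<tau>)^2"] by simp
    then have "\<bar>integral {0<..} R\<bar> \<le> integral {0<..} (\<lambda>z. (t - \<tau>)^2 * W z)"
      unfolding real_norm_def[symmetric] using int_R bound by (intro integral_norm_bound_integral) auto
    also have "\<dots> = integral {0<..} W * (t - \<tau>)^2" by simp
    finally show ?thesis unfolding eq .
  qed
  then show ?thesis unfolding h'_def by blast
qed

lemma gauss_laplace_has_derivative:
  assumes "A \<ge> 0" and "\<tau> > 0"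
    and "continuous_on {0<..} h" and "slow_growth h A"
  shows "(gauss_laplace h A has_real_derivative gauss_laplace (\<lambda>z. - ((A + z^2) * h z)) A \<tau>) (at \<tau>)"
proof -
  obtain C where "\<And>t. \<bar>t - \<tau>\<bar> < \<tau> / 2 \<Longrightarrow>
    \<bar>gauss_laplace h A t - gauss_laplace h A \<tau> - (t - \<tau>) * gauss_laplace (\<lambda>z. - ((A + z^2) * h z)) A \<tau>\<bar>
      \<le> C * (t - \<tau>)^2"
    using gauss_laplace_quadratic_remainder[OF assms] by blast
  then show ?thesis
    using \<open>\<tau> > 0\<close> by (intro has_real_derivative_quadratic_remainder[of "\<tau> / 2"]) auto
qed

lemma integral_pos_if_pos_on_interval:
  fixes F :: "real \<Rightarrow> real"
  assumes lu: "l < u" and sub: "{l..u} \<subseteq> S"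
    and int: "F integrable_on S" and nonneg: "\<And>z. z \<in> S \<Longrightarrow> F z \<ge> 0"
    and cont: "continuous_on {l..u} F" and pos: "\<And>z. z \<in> {l..u} \<Longrightarrow> F z > 0"
  shows "integral S F > 0"
proof -
  obtain x where x: "x \<in> {l..u}" and min: "\<And>y. y \<in> {l..u} \<Longrightarrow> F x \<le> F y"
    using continuous_attains_inf[OF compact_Icc _ cont] lu by fastforce
  have int_lu: "F integrable_on {l..u}"
    by (rule integrable_on_subinterval[OF int sub])
  have "((\<lambda>y. F x) has_integral F x * (u - l)) {l..u}"
    using has_integral_const_real[of "F x" l u] lu by (simp add: mult.commute)
  then have "F x * (u - l) \<le> integral {l..u} F"
    by (rule has_integral_le[OF _ integrable_integral[OF int_lu]]) (use min in auto)
  also have "\<dots> \<le> integral S F"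
    by (rule integral_subset_le[OF sub int_lu int]) (use nonneg in auto)
  finally show ?thesis
    using pos[OF x] lu by (smt (verit) mult_pos_pos)
qed

lemma has_integral_unit_interval:
  fixes F f :: "real \<Rightarrow> real"
  assumes "\<And>s. s \<in> {0..1} \<Longrightarrow> (F has_real_derivative f s) (at s)"
  shows "(f has_integral F 1 - F 0) {0..1}"
proof (rule fundamental_theorem_of_calculus)
  fix s :: real assume "s \<in> {0..1}"
  then show "(F has_vector_derivative f s) (at s within {0..1})"
    using assms by (simp add: has_real_derivative_iff_has_vector_derivative has_vector_derivative_at_within)
qed simp

lemma path_ln_has_derivative:
  fixes \<gamma> b z s :: real
  assumes "\<gamma> + s * b > 0"
  shows "((\<lambda>s. ln ((\<gamma> + s * b)^2 + (s * z)^2)) has_real_derivative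
           (2 * b * (\<gamma> + s * b) + 2 * s * z^2) / ((\<gamma> + s * b)^2 + (s * z)^2)) (at s)"
proof -
  have "(\<gamma> + s * b)^2 + (s * z)^2 > 0"
    using assms by (simp add: add_pos_nonneg)
  then show ?thesis
    by (auto intro!: derivative_eq_intros simp: power2_eq_square field_simps)
qed

lemma path_arctan_has_derivative:
  fixes \<gamma> b z s :: real
  assumes p: "\<gamma> + s * b > 0"
  shows "((\<lambda>s. arctan (s * z / (\<gamma> + s * b))) has_real_derivative
           z * \<gamma> / ((\<gamma> + s * b)^2 + (s * z)^2)) (at s)"
proof -
  have quot: "((\<lambda>s. s * z / (\<gamma> + s * b)) has_real_derivative z * \<gamma> / (\<gamma> + s * b)^2) (at s)"
    using p by (auto intro!: derivative_eq_intros simp: power2_eq_square field_simps)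
  have "1 + (s * z / (\<gamma> + s * b))^2 = ((\<gamma> + s * b)^2 + (s * z)^2) / (\<gamma> + s * b)^2"
    using p by (simp add: power_divide field_simps)
  then have "inverse (1 + (s * z / (\<gamma> + s * b))^2) * (z * \<gamma> / (\<gamma> + s * b)^2)
      = z * \<gamma> / ((\<gamma> + s * b)^2 + (s * z)^2)"
    using p by (simp add: field_simps)
  then show ?thesis
    using DERIV_chain2[OF DERIV_arctan quot] by simp
qed

text \<open>The segment \<open>p(s) = \<gamma> + s b = (1-s)\<gamma> + s a\<close> stays above \<open>min \<gamma> a > 0\<close>.\<close>
lemma zhu_path_lower_bound:
  fixes \<gamma> s :: real
  assumes "\<gamma> > 0" and "0 \<le> s" and "s \<le> 1"
  shows "0 < min \<gamma> (zhu_a \<gamma>)" and "min \<gamma> (zhu_a \<gamma>) \<le> \<gamma> + s * zhu_b \<gamma>"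
proof -
  show "0 < min \<gamma> (zhu_a \<gamma>)"
    using assms by (simp add: zhu_a_def)
  have "\<gamma> + s * zhu_b \<gamma> = (1 - s) * \<gamma> + s * zhu_a \<gamma>"
    by (simp add: zhu_a_def zhu_b_def field_simps)
  moreover have "(1 - s) * min \<gamma> (zhu_a \<gamma>) \<le> (1 - s) * \<gamma>"
    and "s * min \<gamma> (zhu_a \<gamma>) \<le> s * zhu_a \<gamma>"
    using assms by (auto intro: mult_left_mono)
  ultimately show "min \<gamma> (zhu_a \<gamma>) \<le> \<gamma> + s * zhu_b \<gamma>"
    by (simp add: algebra_simps)
qed

corollary zhu_path_pos:
  fixes \<gamma> s :: real
  assumes "\<gamma> > 0" and "0 \<le> s" and "s \<le> 1"
  shows "\<gamma> + s * zhu_b \<gamma> > 0"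
  using zhu_path_lower_bound[OF assms] by linarith

lemma ln_scaled_sqrt:
  fixes \<gamma> x :: real
  assumes "\<gamma> > 0" and "x > 0"
  shows "ln ((1 / \<gamma>) * sqrt x) = ln x / 2 - ln (\<gamma>^2) / 2"
  using assms by (simp add: ln_mult ln_sqrt ln_div ln_realpow)

lemma f1star_has_integral:
  fixes \<gamma> z :: real
  assumes \<gamma>: "\<gamma> > 0" and z: "z > 0"
  shows "((\<lambda>s. (\<gamma> + s * zhu_b \<gamma>) / ((\<gamma> + s * zhu_b \<gamma>)^2 + (s * z)^2)) has_integral f1star z \<gamma>) {0..1}"
proof -
  define b where "b = zhu_b \<gamma>"
  define q where "q s = (\<gamma> + s * b)^2 + (s * z)^2" for s
  define F where "F s = (b * ln (q s) / 2 + z * arctan (s * z / (\<gamma> + s * b))) / (b^2 + z^2)" for s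
  have "(F has_real_derivative (\<gamma> + s * b) / q s) (at s)" if s: "s \<in> {0..1}" for s
  proof -
    have p: "\<gamma> + s * b > 0" using zhu_path_pos[OF \<gamma>] s by (auto simp: b_def)
    then have "q s \<noteq> 0" unfolding q_def by (smt (verit) zero_le_power2 zero_less_power2)
    then have "b * ((2 * b * (\<gamma> + s * b) + 2 * s * z^2) / q s) / 2 + z * (z * \<gamma> / q s)
        = (\<gamma> + s * b) / q s * (b^2 + z^2)"
      by (simp add: field_simps power2_eq_square)
    then have "(b * ((2 * b * (\<gamma> + s * b) + 2 * s * z^2) / q s) / 2 + z * (z * \<gamma> / q s)) / (b^2 + z^2)
        = (\<gamma> + s * b) / q s"
      using z by (simp add: add_nonneg_pos)
    moreover have "(F has_real_derivative
        (b * ((2 * b * (\<gamma> + s * b) + 2 * s * z^2) / q s) / 2 + z * (z * \<gamma> / q s)) / (b^2 + z^2)) (at s)"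
      unfolding F_def q_def
      by (intro DERIV_cdivide DERIV_add DERIV_cmult path_ln_has_derivative path_arctan_has_derivative p)
    ultimately show ?thesis by simp
  qed
  then have "((\<lambda>s. (\<gamma> + s * b) / q s) has_integral F 1 - F 0) {0..1}"
    by (rule has_integral_unit_interval)
  moreover have "F 1 - F 0 = f1star z \<gamma>"
  proof -
    have "\<gamma> + b = zhu_a \<gamma>" by (simp add: b_def zhu_a_def zhu_b_def field_simps)
    then have "F 1 - F 0 = (b * (ln ((zhu_a \<gamma>)^2 + z^2) / 2 - ln (\<gamma>^2) / 2) + z * arctan (z / zhu_a \<gamma>))
        / (b^2 + z^2)"
      by (simp add: F_def q_def diff_divide_distrib add_divide_distrib right_diff_distrib)
    also have "\<dots> = f1star z \<gamma>"
      unfolding f1star_def b_def[symmetric] using ln_scaled_sqrt[OF \<gamma>, of "(zhu_a \<gamma>)^2 + z^2"] z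
      by (simp add: add_nonneg_pos)
    finally show ?thesis .
  qed
  ultimately show ?thesis by (simp add: b_def q_def)
qed

lemma f2star_has_integral:
  fixes \<gamma> z :: real
  assumes \<gamma>: "\<gamma> > 0" and z: "z > 0"
  shows "((\<lambda>s. s * z / ((\<gamma> + s * zhu_b \<gamma>)^2 + (s * z)^2)) has_integral f2star z \<gamma>) {0..1}"
proof -
  define b where "b = zhu_b \<gamma>"
  define q where "q s = (\<gamma> + s * b)^2 + (s * z)^2" for s
  define F where "F s = (z * ln (q s) / 2 - b * arctan (s * z / (\<gamma> + s * b))) / (b^2 + z^2)" for s
  have "(F has_real_derivative s * z / q s) (at s)" if s: "s \<in> {0..1}" for s
  proof -
    have p: "\<gamma> + s * b > 0" using zhu_path_pos[OF \<gamma>] s by (auto simp: b_def)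
    then have "q s \<noteq> 0" unfolding q_def by (smt (verit) zero_le_power2 zero_less_power2)
    then have "z * ((2 * b * (\<gamma> + s * b) + 2 * s * z^2) / q s) / 2 - b * (z * \<gamma> / q s)
        = s * z / q s * (b^2 + z^2)"
      by (simp add: field_simps power2_eq_square)
    then have "(z * ((2 * b * (\<gamma> + s * b) + 2 * s * z^2) / q s) / 2 - b * (z * \<gamma> / q s)) / (b^2 + z^2)
        = s * z / q s"
      using z by (simp add: add_nonneg_pos)
    moreover have "(F has_real_derivative
        (z * ((2 * b * (\<gamma> + s * b) + 2 * s * z^2) / q s) / 2 - b * (z * \<gamma> / q s)) / (b^2 + z^2)) (at s)"
      unfolding F_def q_def
      by (intro DERIV_cdivide DERIV_diff DERIV_cmult path_ln_has_derivative path_arctan_has_derivative p)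
    ultimately show ?thesis by simp
  qed
  then have "((\<lambda>s. s * z / q s) has_integral F 1 - F 0) {0..1}"
    by (rule has_integral_unit_interval)
  moreover have "F 1 - F 0 = f2star z \<gamma>"
  proof -
    have "\<gamma> + b = zhu_a \<gamma>" by (simp add: b_def zhu_a_def zhu_b_def field_simps)
    then have "F 1 - F 0 = (z * (ln ((zhu_a \<gamma>)^2 + z^2) / 2 - ln (\<gamma>^2) / 2) - b * arctan (z / zhu_a \<gamma>))
        / (b^2 + z^2)"
      by (simp add: F_def q_def diff_divide_distrib right_diff_distrib)
    also have "\<dots> = f2star z \<gamma>"
      unfolding f2star_def b_def[symmetric] using ln_scaled_sqrt[OF \<gamma>, of "(zhu_a \<gamma>)^2 + z^2"] z
      by (simp add: add_nonneg_pos)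
    finally show ?thesis .
  qed
  ultimately show ?thesis by (simp add: b_def q_def)
qed

lemma f1star_nonneg:
  fixes \<gamma> z :: real
  assumes \<gamma>: "\<gamma> > 0" and z: "z > 0"
  shows "f1star z \<gamma> \<ge> 0"
proof (rule has_integral_nonneg[OF f1star_has_integral[OF \<gamma> z]])
  fix s :: real assume "s \<in> {0..1}"
  then have "\<gamma> + s * zhu_b \<gamma> > 0" using zhu_path_pos[OF \<gamma>] by auto
  then show "0 \<le> (\<gamma> + s * zhu_b \<gamma>) / ((\<gamma> + s * zhu_b \<gamma>)^2 + (s * z)^2)" by simp
qed

text \<open>The phase is strictly positive, since its integrand is positive on \<open>(0,1]\<close>.\<close>
lemma f2star_pos:
  fixes \<gamma> z :: real
  assumes \<gamma>: "\<gamma> > 0" and z: "z > 0"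
  shows "f2star z \<gamma> > 0"
proof -
  define F where "F s = s * z / ((\<gamma> + s * zhu_b \<gamma>)^2 + (s * z)^2)" for s
  have denom: "(\<gamma> + s * zhu_b \<gamma>)^2 + (s * z)^2 > 0" if "s \<in> {0..1}" for s
  proof -
    have "\<gamma> + s * zhu_b \<gamma> > 0" using zhu_path_pos[OF \<gamma>] that by simp
    then show ?thesis by (simp add: add_pos_nonneg)
  qed
  have F: "(F has_integral f2star z \<gamma>) {0..1}"
    unfolding F_def by (rule f2star_has_integral[OF \<gamma> z])
  have "integral {0..1} F > 0"
  proof (rule integral_pos_if_pos_on_interval[of "1 / 2" 1])
    show "F integrable_on {0..1}" using F by blast
    show "continuous_on {1 / 2..1} F"
      unfolding F_def using denom by (intro continuous_intros) (auto simp: less_imp_neq[symmetric])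
  qed (use z denom in \<open>auto simp: F_def\<close>)
  then show ?thesis using integral_unique[OF F] by simp
qed

lemma f2star_le_linear:
  fixes \<gamma> z :: real
  assumes \<gamma>: "\<gamma> > 0" and z: "z > 0"
  shows "f2star z \<gamma> \<le> z / (min \<gamma> (zhu_a \<gamma>))^2"
proof (rule has_integral_le[OF f2star_has_integral[OF \<gamma> z]])
  let ?m = "min \<gamma> (zhu_a \<gamma>)"
  show "((\<lambda>s. z / ?m^2) has_integral z / ?m^2) {0..1::real}"
    using has_integral_const_real[of "z / ?m^2" 0 "1::real"] by simp
  fix s :: real assume s: "s \<in> {0..1}"
  have m: "?m > 0" and "?m \<le> \<gamma> + s * zhu_b \<gamma>"
    using zhu_path_lower_bound[OF \<gamma>] s by auto
  then have le: "?m^2 \<le> (\<gamma> + s * zhu_b \<gamma>)^2 + (s * z)^2"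
    by (smt (verit) power_mono zero_le_power2)
  have m2: "?m^2 > 0" using m by (simp only: zero_less_power)
  have "0 < ((\<gamma> + s * zhu_b \<gamma>)^2 + (s * z)^2) * ?m^2"
    using le m2 by (intro mult_pos_pos) linarith+
  then have "s * z / ((\<gamma> + s * zhu_b \<gamma>)^2 + (s * z)^2) \<le> s * z / ?m^2"
    using s z le by (intro divide_left_mono) auto
  also have "\<dots> \<le> z / ?m^2"
    using s z m by (intro divide_right_mono) (auto simp: mult_left_le_one_le)
  finally show "s * z / ((\<gamma> + s * zhu_b \<gamma>)^2 + (s * z)^2) \<le> z / ?m^2" .
qed

text \<open>The phase decreases in \<open>\<gamma>\<close>, because \<open>p(s)\<close> increases in \<open>\<gamma>\<close>.\<close>
lemma f2star_antitone_gamma: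
  fixes \<gamma>1 \<gamma>2 z :: real
  assumes \<gamma>1: "\<gamma>1 > 0" and le: "\<gamma>1 \<le> \<gamma>2" and z: "z > 0"
  shows "f2star z \<gamma>2 \<le> f2star z \<gamma>1"
proof (rule has_integral_le[OF f2star_has_integral f2star_has_integral])
  show "\<gamma>2 > 0" "\<gamma>1 > 0" "z > 0" "z > 0" using assms by auto
  fix s :: real assume s: "s \<in> {0..1}"
  have p1: "\<gamma>1 + s * zhu_b \<gamma>1 > 0" using zhu_path_pos[OF \<gamma>1] s by auto
  have "\<gamma>2 + s * zhu_b \<gamma>2 - (\<gamma>1 + s * zhu_b \<gamma>1) = (\<gamma>2 - \<gamma>1) * (1 - s / 2)"
    by (simp add: zhu_b_def field_simps)
  also have "\<dots> \<ge> 0" using le s by auto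
  finally have "(\<gamma>1 + s * zhu_b \<gamma>1)^2 \<le> (\<gamma>2 + s * zhu_b \<gamma>2)^2"
    using p1 by (intro power_mono) auto
  moreover have "(\<gamma>1 + s * zhu_b \<gamma>1)^2 + (s * z)^2 > 0" using p1 by (simp add: add_pos_nonneg)
  ultimately show "s * z / ((\<gamma>2 + s * zhu_b \<gamma>2)^2 + (s * z)^2) \<le> s * z / ((\<gamma>1 + s * zhu_b \<gamma>1)^2 + (s * z)^2)"
    using s z by (intro divide_left_mono) auto
qed

text \<open>At \<open>\<gamma> = 1\<close> (where \<open>b = 0\<close>) the phase stays below \<open>1/2\<close>, so the set defining
  \<open>\<gamma>\<^sub>0\<close> is nonempty.\<close>
lemma f2star_gamma_one:
  fixes z :: real
  assumes z: "z > 0"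
  shows "f2star z 1 \<le> 1 / 2"
proof (rule has_integral_le[OF f2star_has_integral[OF _ z]])
  show "((\<lambda>s. 1 / 2) has_integral 1 / 2) {0..1::real}"
    using has_integral_const_real[of "1 / 2" 0 "1::real"] by simp
  fix s :: real
  have "2 * (s * z) \<le> 1 + (s * z)^2"
    using zero_le_power2[of "s * z - 1"] by (simp add: power2_diff)
  then show "s * z / ((1 + s * zhu_b 1)^2 + (s * z)^2) \<le> 1 / 2"
    by (simp add: zhu_b_def add_pos_nonneg pos_divide_le_eq)
qed simp

lemma f2star_continuous_gamma:
  fixes \<gamma> z :: real
  assumes \<gamma>: "\<gamma> > 0" and z: "z > 0"
  shows "isCont (\<lambda>g. f2star z g) \<gamma>"
proof -
  have "((1 - \<gamma>) / 2)^2 + z^2 \<noteq> 0" using z by (smt (verit) zero_le_power2 zero_less_power2)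
  moreover have "(1 / \<gamma>) * sqrt (((1 + \<gamma>) / 2)^2 + z^2) > 0" using \<gamma> z by (simp add: add_nonneg_pos)
  ultimately show ?thesis
    unfolding f2star_def zhu_a_def zhu_b_def using \<gamma> by (intro continuous_intros) auto
qed

text \<open>Every \<open>\<gamma> \<ge> \<gamma>\<^sub>0\<close> is admissible: for \<open>g > \<gamma>\<close> some admissible value lies below \<open>g\<close>,
  so \<open>f2*(\<zeta>; g) \<le> \<pi>\<close> by monotonicity, and letting \<open>g \<rightarrow> \<gamma>\<^sup>+\<close> gives the claim by continuity.\<close>
lemma f2star_le_pi_above_gamma0:
  fixes \<gamma> z :: real
  assumes \<gamma>: "\<gamma> > 0" and ge: "\<gamma> \<ge> gamma0" and z: "z > 0"
  shows "f2star z \<gamma> \<le> pi"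
proof -
  let ?S = "{\<gamma>. \<gamma> > 0 \<and> (\<forall>\<zeta>>0. f2star \<zeta> \<gamma> \<le> pi)}"
  have "1 \<in> ?S"
    using f2star_gamma_one pi_gt3 by fastforce
  then have ne: "?S \<noteq> {}" by blast
  have bdd: "bdd_below ?S" by (rule bdd_belowI[of _ 0]) auto
  have "f2star z g \<le> pi" if g: "g > \<gamma>" for g
  proof -
    have "Inf ?S < g" using ge g unfolding gamma0_def by linarith
    then obtain x where x: "x \<in> ?S" "x < g" using cInf_less_iff[OF ne bdd] by blast
    then have "f2star z g \<le> f2star z x" using z by (intro f2star_antitone_gamma) auto
    also have "\<dots> \<le> pi" using x z by auto
    finally show ?thesis .
  qed
  then have "eventually (\<lambda>g. f2star z g \<le> pi) (at_right \<gamma>)"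
    by (auto simp: eventually_at_right_less[THEN eventually_mono])
  moreover have "((\<lambda>g. f2star z g) \<longlongrightarrow> f2star z \<gamma>) (at_right \<gamma>)"
    using f2star_continuous_gamma[OF \<gamma> z] by (simp add: isCont_def filterlim_at_split)
  ultimately show ?thesis
    by (intro tendsto_upperbound) auto
qed

definition zhu_kernel :: "real \<Rightarrow> real \<Rightarrow> real" where
  "zhu_kernel \<gamma> z = z / ((zhu_a \<gamma>)^2 + z^2) * exp (- f1star z \<gamma>) * sin (f2star z \<gamma>)"

lemma rho_zhu_eq_gauss_laplace:
  "rho_zhu E \<sigma> \<gamma> \<tau> = \<gamma> * E / (1 + \<gamma>)
     + 2 * E / pi * gauss_laplace (zhu_kernel \<gamma>) ((zhu_a \<gamma>)^2) (\<sigma>^2 / 2 * \<tau>)"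
proof -
  have "(\<lambda>\<zeta>. \<zeta> * exp (- \<tau> * \<sigma>^2 / 2 * ((zhu_a \<gamma>)^2 + \<zeta>^2)) / ((zhu_a \<gamma>)^2 + \<zeta>^2)
            * exp (- f1star \<zeta> \<gamma>) * sin (f2star \<zeta> \<gamma>))
      = (\<lambda>z. zhu_kernel \<gamma> z * exp (- (\<sigma>^2 / 2 * \<tau>) * ((zhu_a \<gamma>)^2 + z^2)))"
    by (simp add: zhu_kernel_def mult_ac)
  then show ?thesis
    unfolding rho_zhu_def gauss_laplace_def by simp
qed

lemma zhu_kernel_continuous:
  fixes \<gamma> :: real
  assumes \<gamma>: "\<gamma> > 0"
  shows "continuous_on {0<..} (zhu_kernel \<gamma>)"
proof -
  have a: "zhu_a \<gamma> > 0" using \<gamma> by (simp add: zhu_a_def)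
  have "\<forall>z\<in>{0<..}. (zhu_b \<gamma>)^2 + z^2 \<noteq> 0 \<and> (zhu_a \<gamma>)^2 + z^2 \<noteq> 0 \<and> (1 / \<gamma>) * sqrt ((zhu_a \<gamma>)^2 + z^2) > 0"
    using \<gamma> by (auto simp: add_nonneg_pos)
  then show ?thesis
    unfolding zhu_kernel_def f1star_def f2star_def using a by (intro continuous_intros) auto
qed

text \<open>Since \<open>f1* \<ge> 0\<close>, the kernel is bounded by \<open>\<zeta> / (a\<^sup>2 + \<zeta>\<^sup>2) \<le> 1 / (2a)\<close>.\<close>
lemma zhu_kernel_slow_growth:
  fixes \<gamma> :: real
  assumes \<gamma>: "\<gamma> > 0"
  shows "slow_growth (zhu_kernel \<gamma>) ((zhu_a \<gamma>)^2)"
  unfolding slow_growth_def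
proof (intro allI impI exI[of _ "1 / (2 * zhu_a \<gamma>)"])
  fix \<eta> z :: real assume \<eta>: "\<eta> > 0" and z: "z > 0"
  define a where "a = zhu_a \<gamma>"
  have a: "a > 0" using \<gamma> by (simp add: a_def zhu_a_def)
  have u: "a^2 + z^2 > 0" using z by (simp add: add_nonneg_pos)
  have eq: "\<bar>zhu_kernel \<gamma> z\<bar> = z / (a^2 + z^2) * (exp (- f1star z \<gamma>) * \<bar>sin (f2star z \<gamma>)\<bar>)"
    unfolding zhu_kernel_def a_def[symmetric] abs_mult using z u by simp
  have "exp (- f1star z \<gamma>) * \<bar>sin (f2star z \<gamma>)\<bar> \<le> 1"
    using f1star_nonneg[OF \<gamma> z] abs_sin_le_one[of "f2star z \<gamma>"] by (simp add: mult_le_one)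
  then have "z / (a^2 + z^2) * (exp (- f1star z \<gamma>) * \<bar>sin (f2star z \<gamma>)\<bar>) \<le> z / (a^2 + z^2)"
    by (rule mult_left_le) (use z u in simp)
  then have "\<bar>zhu_kernel \<gamma> z\<bar> \<le> z / (a^2 + z^2)"
    unfolding eq .
  also have "\<dots> \<le> 1 / (2 * a)"
    using zero_le_power2[of "a - z"] a u by (simp add: power2_diff field_simps)
  also have "\<dots> \<le> 1 / (2 * a) * exp (\<eta> * (a^2 + z^2))"
  proof -
    have "1 \<le> exp (\<eta> * (a^2 + z^2))" using \<eta> u by simp
    then have "1 / (2 * a) * 1 \<le> 1 / (2 * a) * exp (\<eta> * (a^2 + z^2))"
      using a by (intro mult_left_mono) auto
    then show ?thesis by simp
  qed
  finally show "\<bar>zhu_kernel \<gamma> z\<bar> \<le> 1 / (2 * zhu_a \<gamma>) * exp (\<eta> * ((zhu_a \<gamma>)^2 + z^2))"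
    by (simp add: a_def)
qed

text \<open>Positivity of the second \<open>\<tau>\<close>-derivative: the weighted kernel is nonnegative when
  \<open>f2* \<in> [0, \<pi>]\<close>, and strictly positive for small \<open>\<zeta>\<close>, where \<open>0 < f2* \<le> \<zeta> / m\<^sup>2 < \<pi>\<close>.\<close>
lemma zhu_kernel_second_moment_pos:
  fixes \<gamma> t :: real
  assumes \<gamma>: "\<gamma> > 0" and t: "t > 0"
    and phase: "\<forall>z>0. f2star z \<gamma> \<in> {0..pi}"
  shows "gauss_laplace (\<lambda>z. ((zhu_a \<gamma>)^2 + z^2)^2 * zhu_kernel \<gamma> z) ((zhu_a \<gamma>)^2) t > 0"
proof -
  define A where "A = (zhu_a \<gamma>)^2"
  define F where "F z = (A + z^2)^2 * zhu_kernel \<gamma> z * exp (- t * (A + z^2))" for z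
  define m where "m = min \<gamma> (zhu_a \<gamma>)"
  define u where "u = min 1 (m^2)"
  have m: "m > 0" using \<gamma> by (simp add: m_def zhu_a_def)
  then have u: "u > 0" "u \<le> 1" "u \<le> m^2" by (auto simp: u_def)
  have F_eq: "F z = (A + z^2) * z * exp (- f1star z \<gamma>) * sin (f2star z \<gamma>) * exp (- t * (A + z^2))"
    if "z > 0" for z
  proof -
    have "A + z^2 > 0" using that by (simp add: A_def add_nonneg_pos)
    then show ?thesis by (simp add: F_def zhu_kernel_def A_def power2_eq_square)
  qed
  have "slow_growth (\<lambda>z. (A + z^2) * ((A + z^2) * zhu_kernel \<gamma> z)) A"
    unfolding A_def by (intro slow_growth_weight zhu_kernel_slow_growth \<gamma>) simp_all
  then have "(\<lambda>z. (A + z^2) * ((A + z^2) * zhu_kernel \<gamma> z) * exp (- t * (A + z^2))) integrable_on {0<..}"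
    by (intro slow_growth_integrable t continuous_intros zhu_kernel_continuous[OF \<gamma>])
  then have int: "F integrable_on {0<..}"
    by (rule integrable_eq) (simp add: F_def power2_eq_square)
  have "integral {0<..} F > 0"
  proof (rule integral_pos_if_pos_on_interval[OF _ _ int])
    show "u / 2 < u" "{u / 2..u} \<subseteq> {0<..}" using u by auto
    show "continuous_on {u / 2..u} F"
      using u by (intro continuous_on_subset[OF _ \<open>{u / 2..u} \<subseteq> {0<..}\<close>])
        (auto simp: F_def intro!: continuous_intros zhu_kernel_continuous[OF \<gamma>])
    show "F z \<ge> 0" if "z \<in> {0<..}" for z
    proof -
      have "z > 0" using that by simp
      moreover have "sin (f2star z \<gamma>) \<ge> 0" using phase \<open>z > 0\<close> by (intro sin_ge_zero) auto
      ultimately show ?thesis unfolding F_eq[OF \<open>z > 0\<close>] by (simp add: A_def)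
    qed
    show "F z > 0" if z: "z \<in> {u / 2..u}" for z
    proof -
      have "z > 0" using z u by simp
      have "f2star z \<gamma> \<le> z / m^2" using f2star_le_linear[OF \<gamma> \<open>z > 0\<close>] by (simp add: m_def)
      also have "\<dots> \<le> 1" using z u m by (simp add: field_simps)
      finally have "sin (f2star z \<gamma>) > 0"
        using f2star_pos[OF \<gamma> \<open>z > 0\<close>] pi_gt3 by (intro sin_gt_zero) auto
      moreover have "A + z^2 > 0" using \<open>z > 0\<close> by (simp add: A_def add_nonneg_pos)
      ultimately show ?thesis using \<open>z > 0\<close> unfolding F_eq[OF \<open>z > 0\<close>] by simp
    qed
  qed
  then show ?thesis
    unfolding gauss_laplace_def F_def A_def by (simp add: mult.assoc)
qed

lemma rho_zhu_derivatives:
  fixes E \<sigma> \<gamma> \<tau> :: real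
  assumes \<sigma>: "\<sigma> > 0" and \<gamma>: "\<gamma> > 0" and \<tau>: "\<tau> > 0"
  defines "A \<equiv> (zhu_a \<gamma>)^2" and "c \<equiv> \<sigma>^2 / 2"
  shows "(rho_zhu E \<sigma> \<gamma> has_real_derivative
           2 * E / pi * (gauss_laplace (\<lambda>z. - ((A + z^2) * zhu_kernel \<gamma> z)) A (c * \<tau>) * c)) (at \<tau>)"
    and "(deriv (rho_zhu E \<sigma> \<gamma>) has_real_derivative
           2 * E / pi * (gauss_laplace (\<lambda>z. (A + z^2)^2 * zhu_kernel \<gamma> z) A (c * \<tau>) * c * c)) (at \<tau>)"
proof -
  define k1 where "k1 = (\<lambda>z. - ((A + z^2) * zhu_kernel \<gamma> z))"
  have A: "A \<ge> 0" and c: "c > 0" using \<sigma> by (simp_all add: A_def c_def)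
  have cont: "continuous_on {0<..} (zhu_kernel \<gamma>)" and slow: "slow_growth (zhu_kernel \<gamma>) A"
    using zhu_kernel_continuous[OF \<gamma>] zhu_kernel_slow_growth[OF \<gamma>] by (simp_all add: A_def)
  have cont1: "continuous_on {0<..} k1"
    unfolding k1_def by (intro continuous_intros cont)
  have slow1: "slow_growth k1 A"
    unfolding k1_def using slow_growth_cmult[OF slow_growth_weight[OF A slow], of "-1"] by simp
  have k2: "(\<lambda>z. - ((A + z^2) * k1 z)) = (\<lambda>z. (A + z^2)^2 * zhu_kernel \<gamma> z)"
    by (simp add: k1_def power2_eq_square mult.assoc)
  have scale: "((\<lambda>t. c * t) has_real_derivative c) (at t)" for t
    by (auto intro!: derivative_eq_intros)
  have rho: "rho_zhu E \<sigma> \<gamma> = (\<lambda>t. \<gamma> * E / (1 + \<gamma>) + 2 * E / pi * gauss_laplace (zhu_kernel \<gamma>) A (c * t))"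
    by (simp add: rho_zhu_eq_gauss_laplace A_def c_def fun_eq_iff)
  have d1: "(rho_zhu E \<sigma> \<gamma> has_real_derivative 2 * E / pi * (gauss_laplace k1 A (c * t) * c)) (at t)"
    if "t > 0" for t
  proof -
    have "((\<lambda>t. gauss_laplace (zhu_kernel \<gamma>) A (c * t)) has_real_derivative gauss_laplace k1 A (c * t) * c) (at t)"
      unfolding k1_def using that c
      by (intro DERIV_chain2[OF gauss_laplace_has_derivative[OF A _ cont slow] scale]) simp
    from DERIV_add[OF DERIV_const DERIV_cmult[OF this], of "\<gamma> * E / (1 + \<gamma>)" "2 * E / pi"]
    show ?thesis unfolding rho by simp
  qed
  then show "(rho_zhu E \<sigma> \<gamma> has_real_derivative
      2 * E / pi * (gauss_laplace (\<lambda>z. - ((A + z^2) * zhu_kernel \<gamma> z)) A (c * \<tau>) * c)) (at \<tau>)"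
    using \<tau> unfolding k1_def by blast
  have "((\<lambda>t. 2 * E / pi * (gauss_laplace k1 A (c * t) * c)) has_real_derivative
      2 * E / pi * (gauss_laplace (\<lambda>z. - ((A + z^2) * k1 z)) A (c * \<tau>) * c * c)) (at \<tau>)"
    using \<tau> c
    by (intro DERIV_cmult DERIV_cmult_right DERIV_chain2[OF gauss_laplace_has_derivative[OF A _ cont1 slow1] scale])
      simp
  then show "(deriv (rho_zhu E \<sigma> \<gamma>) has_real_derivative
      2 * E / pi * (gauss_laplace (\<lambda>z. (A + z^2)^2 * zhu_kernel \<gamma> z) A (c * \<tau>) * c * c)) (at \<tau>)"
    unfolding k2
    by (rule has_field_derivative_transform_within_open[where S = "{0<..}"])
      (use \<tau> DERIV_imp_deriv[OF d1] in auto)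
qed

theorem mainTheorem3:
  fixes E r \<sigma> \<gamma> :: real
  assumes "E > 0" and "r > 0" and "\<sigma> > 0"
    and "\<gamma> = 2 * r / \<sigma>^2"
    and "\<gamma> \<ge> gamma0"
  shows "(\<forall>\<zeta>>0. f2star \<zeta> \<gamma> \<in> {0..pi})
    \<and> (\<forall>\<tau>>0. rho_zhu E \<sigma> \<gamma> differentiable (at \<tau>)
          \<and> deriv (rho_zhu E \<sigma> \<gamma>) differentiable (at \<tau>)
          \<and> deriv (deriv (rho_zhu E \<sigma> \<gamma>)) \<tau> > 0)
    \<and> convex_on {0<..} (rho_zhu E \<sigma> \<gamma>)"
proof -
  let ?\<rho> = "rho_zhu E \<sigma> \<gamma>"
  have \<gamma>: "\<gamma> > 0" using assms(2-4) by simp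
  have phase: "\<forall>\<zeta>>0. f2star \<zeta> \<gamma> \<in> {0..pi}"
    using f2star_pos[OF \<gamma>] f2star_le_pi_above_gamma0[OF \<gamma> assms(5)] by (auto intro: less_imp_le)
  have diff: "?\<rho> differentiable (at \<tau>)" "deriv ?\<rho> differentiable (at \<tau>)"
    and deriv1: "(?\<rho> has_real_derivative deriv ?\<rho> \<tau>) (at \<tau>)"
    and deriv2: "(deriv ?\<rho> has_real_derivative deriv (deriv ?\<rho>) \<tau>) (at \<tau>)"
    and convex_deriv: "deriv (deriv ?\<rho>) \<tau> > 0" if \<tau>: "\<tau> > 0" for \<tau>
  proof -
    note d1 = rho_zhu_derivatives(1)[OF assms(3) \<gamma> \<tau>, of E]
      and d2 = rho_zhu_derivatives(2)[OF assms(3) \<gamma> \<tau>, of E]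
    show "?\<rho> differentiable (at \<tau>)" "deriv ?\<rho> differentiable (at \<tau>)"
      using d1 d2 real_differentiable_def by blast+
    show "(?\<rho> has_real_derivative deriv ?\<rho> \<tau>) (at \<tau>)"
      unfolding DERIV_imp_deriv[OF d1] by (rule d1)
    show "(deriv ?\<rho> has_real_derivative deriv (deriv ?\<rho>) \<tau>) (at \<tau>)"
      unfolding DERIV_imp_deriv[OF d2] by (rule d2)
    have "0 < gauss_laplace (\<lambda>z. ((zhu_a \<gamma>)^2 + z^2)^2 * zhu_kernel \<gamma> z) ((zhu_a \<gamma>)^2) (\<sigma>^2 / 2 * \<tau>)"
      using assms(3) \<tau> by (intro zhu_kernel_second_moment_pos[OF \<gamma> _ phase]) simp
    then show "deriv (deriv ?\<rho>) \<tau> > 0"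
      unfolding DERIV_imp_deriv[OF d2] using assms(1,3) by simp
  qed
  have "convex_on {0<..} ?\<rho>"
    by (rule f''_ge0_imp_convex[of _ _ "deriv ?\<rho>" "deriv (deriv ?\<rho>)"])
      (simp_all add: deriv1 deriv2 convex_deriv less_imp_le)
  then show ?thesis using phase diff convex_deriv by blast
qed

end
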